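(* Let $\phi:\mathcal{F}\to\mathbb{R}$ be any function, $\delta\in(0,1)$, $\epsilon_5:=2B_{\text{ref}}\sqrt{\frac{\log(2\delta^{-1})}{2n}}$, and $\hat a_-(\epsilon_5):=\min_{f\in\hat{\mathcal{R}}(\epsilon_5)}\phi(f)$, $\hat a_+(\epsilon_5):=\max_{f\in\hat{\mathcal{R}}(\epsilon_5)}\phi(f)$. If $|L(f,z)-L(f_{\text{ref}},z)|\le B_{\text{ref}}$ for all $z\in\mathcal{Z}$ and all $f\in\mathcal{R}(0)$, then $$\mathbb{P}\left[\{\phi(f):f\in\mathcal{R}(0)\}\subset[\hat a_-(\epsilon_5),\hat a_+(\epsilon_5)]\right]\ge1-\delta.$$
   Context: Let $Z$ be a random variable on $\mathcal{Z}=\mathcal{Y}\times\mathcal{X}$; $\mathcal{F}$ a set of measurable functions $\mathcal{X}\to\mathcal{Y}$; $L:\mathcal{F}\times\mathcal{Z}\to\mathbb{R}_{\ge0}$ a nonnegative loss; data are $n\ge2$ i.i.d. copies $Z_1,\dots,Z_n$ of $Z$. $e_{\text{orig}}(f)=\mathbb{E}L(f,Z)$, $\hat e_{\text{orig}}(f)=\frac1n\sum_iL(f,Z_i)$. A reference model $f_{\text{ref}}\in\mathcal{F}$ is fixed in advance. $\mathcal{R}(\epsilon)=\{f\in\mathcal{F}:e_{\text{orig}}(f)\le e_{\text{orig}}(f_{\text{ref}})+\epsilon\}$ and $\hat{\mathcal{R}}(\epsilon)=\{f_{\text{ref}}\}\cup\{f\in\mathcal{F}:\hat e_{\text{orig}}(f)\le\hat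 e_{\text{orig}}(f_{\text{ref}})+\epsilon\}$. All minima/maxima of $\phi$ over $\mathcal{R}(0)$ and $\hat{\mathcal{R}}(\epsilon_5)$ are assumed to be attained. *)

theory Defs
  imports "HOL-Probability.Probability"
begin

definition e_orig :: "('y \<times> 'x) measure \<Rightarrow> (('x \<Rightarrow> 'y) \<Rightarrow> 'y \<times> 'x \<Rightarrow> real) \<Rightarrow> ('x \<Rightarrow> 'y) \<Rightarrow> real" where
  "e_orig D L f = (\<integral>z. L f z \<partial>D)"

definition e_hat :: "(('x \<Rightarrow> 'y) \<Rightarrow> 'y \<times> 'x \<Rightarrow> real) \<Rightarrow> nat \<Rightarrow> (nat \<Rightarrow> 'y \<times> 'x) \<Rightarrow> ('x \<Rightarrow> 'y) \<Rightarrow> real" where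
  "e_hat L n S f = (\<Sum>i<n. L f (S i)) / real n"

definition R_set where
  "R_set F D L f_ref eps = {f \<in> F. e_orig D L f \<le> e_orig D L f_ref + eps}"

definition R_hat where
  "R_hat F L f_ref n S eps = insert f_ref {f \<in> F. e_hat L n S f \<le> e_hat L n S f_ref + eps}"

definition eps5 :: "real \<Rightarrow> real \<Rightarrow> nat \<Rightarrow> real" where
  "eps5 B \<delta> n = 2 * B * sqrt (ln (2 / \<delta>) / (2 * real n))"

end

theory Submission imports Defs begin

text \<open>Take models g_min, g_max \<in> R(0) attaining the extremes of \<phi> on R(0). For each f \<in> R(0)
  the differences L f z - L f_ref z are bounded by B_ref and have nonpositive mean, so by
  Hoeffding's inequality the empirical excess loss of f is at most eps5 except with probability
  \<delta>/2; then f \<in> hat R(eps5). By the union bound, g_min and g_max both lie in hat R(eps5) with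
  probability at least 1 - \<delta>, and on that event every value of \<phi> on R(0) lies between
  \<phi> g_min and \<phi> g_max, hence between the minimum and maximum of \<phi> on hat R(eps5).\<close>

lemma indep_vars_PiM_coordinates:
  assumes D: "prob_space D" and I: "I \<noteq> {}"
  shows "prob_space.indep_vars (PiM I (\<lambda>_. D)) (\<lambda>_. D) (\<lambda>i S. S i) I"
proof -
  interpret P: prob_space "PiM I (\<lambda>_. D)" by (intro prob_space_PiM D)
  have "distr (PiM I (\<lambda>_. D)) (PiM I (\<lambda>_. D)) (\<lambda>S. \<lambda>i\<in>I. S i) = PiM I (\<lambda>_. D)"
    by (subst distr_cong[of _ _ _ _ _ "\<lambda>S. S"]) (auto simp: space_PiM PiE_def extensional_restrict)
  also have "\<dots> = (\<Pi>\<^sub>M i\<in>I. distr (PiM I (\<lambda>_. D)) D (\<lambda>S. S i))"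
    by (intro PiM_cong refl) (simp add: distr_PiM_component[of I "\<lambda>_. D"] D)
  finally show ?thesis
    by (subst P.indep_vars_iff_distr_eq_PiM'[OF I]) auto
qed

lemma integral_PiM_coordinate:
  fixes g :: "'a \<Rightarrow> real"
  assumes D: "prob_space D" and i: "i \<in> I" and g: "g \<in> borel_measurable D"
  shows "(\<integral>S. g (S i) \<partial>PiM I (\<lambda>_. D)) = (\<integral>z. g z \<partial>D)"
proof -
  have "(\<integral>z. g z \<partial>D) = (\<integral>z. g z \<partial>distr (PiM I (\<lambda>_. D)) D (\<lambda>S. S i))"
    by (simp add: distr_PiM_component[of I "\<lambda>_. D"] D i)
  also have "\<dots> = (\<integral>S. g (S i) \<partial>PiM I (\<lambda>_. D))"
    using i g by (intro integral_distr) auto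
  finally show ?thesis by simp
qed

lemma prob_PiM_coordinate_sum_ge:
  fixes g :: "'a \<Rightarrow> real"
  assumes D: "prob_space D" and n: "n > 0" and g: "g \<in> borel_measurable D"
    and bounded: "\<And>z. z \<in> space D \<Longrightarrow> \<bar>g z\<bar> \<le> B" and B: "B > 0"
    and mean: "(\<integral>z. g z \<partial>D) \<le> 0" and t: "t \<ge> 0"
  shows "measure (PiM {..<n} (\<lambda>_. D))
           {S \<in> space (PiM {..<n} (\<lambda>_. D)). (\<Sum>i<n. g (S i)) \<ge> real n * t}
         \<le> exp (- real n * t\<^sup>2 / (2 * B\<^sup>2))"
proof -
  define P where "P = PiM {..<n} (\<lambda>_. D)"
  interpret P: prob_space P unfolding P_def by (intro prob_space_PiM D)
  define \<mu> where "\<mu> = (\<Sum>i<n. P.expectation (\<lambda>S. g (S i)))"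
  interpret H: Hoeffding_ineq P "{..<n}" "\<lambda>i S. g (S i)" "\<lambda>_. -B" "\<lambda>_. B" \<mu>
  proof unfold_locales
    have "P.indep_vars (\<lambda>_. D) (\<lambda>i S. S i) {..<n}"
      using indep_vars_PiM_coordinates[OF D, of "{..<n}"] n unfolding P_def by auto
    then show "P.indep_vars (\<lambda>_. borel) (\<lambda>i S. g (S i)) {..<n}"
      using P.indep_vars_compose2[of "\<lambda>_. D" _ _ "\<lambda>_. g" "\<lambda>_. borel"] g by auto
    show "AE S in P. g (S i) \<in> {-B..B}" if "i \<in> {..<n}" for i
      using that bounded by (intro AE_I2) (force simp: P_def space_PiM abs_le_iff)
  qed (simp_all add: \<mu>_def)
  have "\<mu> \<le> 0"
    using mean by (simp add: \<mu>_def P_def integral_PiM_coordinate D g mult_nonneg_nonpos)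
  then have "{S \<in> space P. (\<Sum>i<n. g (S i)) \<ge> real n * t}
      \<subseteq> {S \<in> space P. (\<Sum>i<n. g (S i)) \<ge> \<mu> + real n * t}"
    by auto
  then have "P.prob {S \<in> space P. (\<Sum>i<n. g (S i)) \<ge> real n * t}
      \<le> P.prob {S \<in> space P. (\<Sum>i<n. g (S i)) \<ge> \<mu> + real n * t}"
    using g by (intro P.finite_measure_mono) (auto simp: P_def)
  also have "\<dots> \<le> exp (-2 * (real n * t)\<^sup>2 / (\<Sum>i<n. (B - - B)\<^sup>2))"
    using n B t by (intro H.Hoeffding_ineq_ge) auto
  also have "-2 * (real n * t)\<^sup>2 / (\<Sum>i<n. (B - - B)\<^sup>2) = - real n * t\<^sup>2 / (2 * B\<^sup>2)"
    using n B by (simp add: field_simps power2_eq_square)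
  finally show ?thesis unfolding P_def .
qed

lemma exp_eps5_exponent:
  assumes "B > 0" and "0 < \<delta>" "\<delta> \<le> 2" and "n > 0"
  shows "exp (- real n * (eps5 B \<delta> n)\<^sup>2 / (2 * B\<^sup>2)) = \<delta> / 2"
proof -
  have "(eps5 B \<delta> n)\<^sup>2 = 4 * B\<^sup>2 * (ln (2 / \<delta>) / (2 * real n))"
    using assms by (simp add: eps5_def power_mult_distrib real_sqrt_pow2)
  then have "- real n * (eps5 B \<delta> n)\<^sup>2 / (2 * B\<^sup>2) = - ln (2 / \<delta>)"
    using assms by (simp add: field_simps)
  then show ?thesis
    using assms by (simp add: exp_minus)
qed

lemma prob_PiM_coordinate_sum_le_eps5:
  fixes g :: "'a \<Rightarrow> real"
  assumes D: "prob_space D" and n: "n > 0" and g: "g \<in> borel_measurable D"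
    and bounded: "\<And>z. z \<in> space D \<Longrightarrow> \<bar>g z\<bar> \<le> B"
    and mean: "(\<integral>z. g z \<partial>D) \<le> 0" and \<delta>: "0 < \<delta>" "\<delta> < 1"
  shows "measure (PiM {..<n} (\<lambda>_. D))
           {S \<in> space (PiM {..<n} (\<lambda>_. D)). (\<Sum>i<n. g (S i)) \<le> real n * eps5 B \<delta> n}
         \<ge> 1 - \<delta> / 2"
proof -
  define P where "P = PiM {..<n} (\<lambda>_. D)"
  interpret P: prob_space P unfolding P_def by (intro prob_space_PiM D)
  have coordinate: "S i \<in> space D" if "S \<in> space P" "i < n" for S i
    using that by (auto simp: P_def space_PiM)
  obtain z where "z \<in> space D"
    using prob_space.not_empty[OF D] by auto
  with bounded have "B \<ge> 0" by fastforce
  show ?thesis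
  proof (cases "B = 0")
    case True
    then have "{S \<in> space P. (\<Sum>i<n. g (S i)) \<le> real n * eps5 B \<delta> n} = space P"
      using bounded coordinate by (auto simp: eps5_def intro!: sum_nonpos)
    then show ?thesis
      using \<delta> by (simp add: P_def[symmetric] P.prob_space)
  next
    case False
    with \<open>B \<ge> 0\<close> have "B > 0" by simp
    have "eps5 B \<delta> n \<ge> 0"
      using \<open>B > 0\<close> \<delta> by (simp add: eps5_def)
    have "space P - {S \<in> space P. (\<Sum>i<n. g (S i)) \<le> real n * eps5 B \<delta> n}
        \<subseteq> {S \<in> space P. (\<Sum>i<n. g (S i)) \<ge> real n * eps5 B \<delta> n}"
      by auto
    then have "P.prob (space P - {S \<in> space P. (\<Sum>i<n. g (S i)) \<le> real n * eps5 B \<delta> n})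
        \<le> P.prob {S \<in> space P. (\<Sum>i<n. g (S i)) \<ge> real n * eps5 B \<delta> n}"
      using g by (intro P.finite_measure_mono) (auto simp: P_def)
    also have "\<dots> \<le> \<delta> / 2"
      using prob_PiM_coordinate_sum_ge[OF D n g bounded \<open>B > 0\<close> mean \<open>eps5 B \<delta> n \<ge> 0\<close>]
        exp_eps5_exponent[OF \<open>B > 0\<close> \<delta>(1) _ n] \<delta>(2)
      by (simp add: P_def)
    finally show ?thesis
      using g by (subst (asm) P.prob_compl) (auto simp: P_def)
  qed
qed

lemma (in prob_space) prob_Int_ge:
  assumes "A \<in> events" "B \<in> events" "prob A \<ge> 1 - a" "prob B \<ge> 1 - b"
  shows "prob (A \<inter> B) \<ge> 1 - (a + b)"
proof -
  have "prob (space M - A \<inter> B) \<le> prob (space M - A) + prob (space M - B)"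
    using assms by (subst Diff_Int) (intro measure_Un_le, auto)
  then show ?thesis
    using assms by (simp add: prob_compl)
qed

lemma image_subset_atLeastAtMost_Inf_Sup:
  fixes \<phi> :: "'a \<Rightarrow> 'b :: conditionally_complete_lattice"
  assumes "a \<in> B" "b \<in> B" "\<And>x. x \<in> A \<Longrightarrow> \<phi> a \<le> \<phi> x \<and> \<phi> x \<le> \<phi> b"
    and "bdd_below (\<phi> ` B)" "bdd_above (\<phi> ` B)"
  shows "\<phi> ` A \<subseteq> {Inf (\<phi> ` B) .. Sup (\<phi> ` B)}"
proof
  fix y assume "y \<in> \<phi> ` A"
  then obtain x where "x \<in> A" "y = \<phi> x" by blast
  have "Inf (\<phi> ` B) \<le> \<phi> a" "\<phi> b \<le> Sup (\<phi> ` B)"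
    using assms by (auto intro: cInf_lower cSup_upper)
  with assms(3)[OF \<open>x \<in> A\<close>] \<open>y = \<phi> x\<close> show "y \<in> {Inf (\<phi> ` B) .. Sup (\<phi> ` B)}"
    by (auto intro: order_trans)
qed

lemma R_hat_memberI:
  assumes "f \<in> F" and "n > 0" and "(\<Sum>i<n. L f (S i) - L f_ref (S i)) \<le> real n * \<epsilon>"
  shows "f \<in> R_hat F L f_ref n S \<epsilon>"
proof -
  have "(\<Sum>i<n. L f (S i)) / real n \<le> (\<Sum>i<n. L f_ref (S i)) / real n + \<epsilon>"
    using assms by (simp add: sum_subtractf field_simps)
  then show ?thesis
    using assms by (simp add: R_hat_def e_hat_def)
qed

lemma R_set_0_in_R_hat_eps5_whp:
  assumes D: "prob_space D" and n: "n > 0"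
    and L_int: "\<And>f. f \<in> F \<Longrightarrow> integrable D (L f)" and f_ref: "f_ref \<in> F"
    and f: "f \<in> R_set F D L f_ref 0"
    and bounded: "\<And>z. z \<in> space D \<Longrightarrow> \<bar>L f z - L f_ref z\<bar> \<le> B"
    and \<delta>: "0 < \<delta>" "\<delta> < 1"
  obtains E where "E \<in> sets (PiM {..<n} (\<lambda>_. D))"
    and "E \<subseteq> {S \<in> space (PiM {..<n} (\<lambda>_. D)). f \<in> R_hat F L f_ref n S (eps5 B \<delta> n)}"
    and "measure (PiM {..<n} (\<lambda>_. D)) E \<ge> 1 - \<delta> / 2"
proof
  have "f \<in> F" and "e_orig D L f \<le> e_orig D L f_ref"
    using f by (auto simp: R_set_def)
  define g where "g z = L f z - L f_ref z" for z
  have g: "g \<in> borel_measurable D"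
    unfolding g_def using L_int \<open>f \<in> F\<close> f_ref
    by (intro borel_measurable_diff borel_measurable_integrable)
  have "(\<integral>z. g z \<partial>D) \<le> 0"
    using L_int \<open>f \<in> F\<close> f_ref \<open>e_orig D L f \<le> e_orig D L f_ref\<close> by (simp add: g_def e_orig_def)
  define E where "E = {S \<in> space (PiM {..<n} (\<lambda>_. D)). (\<Sum>i<n. g (S i)) \<le> real n * eps5 B \<delta> n}"
  show "E \<in> sets (PiM {..<n} (\<lambda>_. D))"
    using g unfolding E_def by measurable
  show "E \<subseteq> {S \<in> space (PiM {..<n} (\<lambda>_. D)). f \<in> R_hat F L f_ref n S (eps5 B \<delta> n)}"
    using \<open>f \<in> F\<close> n by (auto simp: E_def g_def intro: R_hat_memberI)
  show "measure (PiM {..<n} (\<lambda>_. D)) E \<ge> 1 - \<delta> / 2"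
    unfolding E_def using prob_PiM_coordinate_sum_le_eps5[OF D n g _ _ \<delta>] bounded
      \<open>(\<integral>z. g z \<partial>D) \<le> 0\<close> by (simp add: g_def)
qed

theorem proposition12:
  fixes D :: "('y \<times> 'x) measure"
    and F :: "('x \<Rightarrow> 'y) set"
    and L :: "('x \<Rightarrow> 'y) \<Rightarrow> 'y \<times> 'x \<Rightarrow> real"
    and f_ref :: "'x \<Rightarrow> 'y"
    and \<phi> :: "('x \<Rightarrow> 'y) \<Rightarrow> real"
    and n :: nat and \<delta> B_ref :: real
  assumes D: "prob_space D"
    and n: "n \<ge> 2"
    and L_nonneg: "\<And>f z. f \<in> F \<Longrightarrow> z \<in> space D \<Longrightarrow> L f z \<ge> 0"
    and L_int: "\<And>f. f \<in> F \<Longrightarrow> integrable D (L f)"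
    and f_ref: "f_ref \<in> F"
    and \<delta>: "0 < \<delta>" "\<delta> < 1"
    and bound: "\<And>f z. f \<in> R_set F D L f_ref 0 \<Longrightarrow> z \<in> space D \<Longrightarrow>
                  \<bar>L f z - L f_ref z\<bar> \<le> B_ref"
    and R0_min: "\<exists>g\<in>R_set F D L f_ref 0. \<forall>f\<in>R_set F D L f_ref 0. \<phi> g \<le> \<phi> f"
    and R0_max: "\<exists>g\<in>R_set F D L f_ref 0. \<forall>f\<in>R_set F D L f_ref 0. \<phi> f \<le> \<phi> g"
    and Rhat_min: "\<And>S. S \<in> space (PiM {..<n} (\<lambda>_. D)) \<Longrightarrow>
        \<exists>g\<in>R_hat F L f_ref n S (eps5 B_ref \<delta> n). \<forall>f\<in>R_hat F L f_ref n S (eps5 B_ref \<delta> n). \<phi> g \<le> \<phi> f"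
    and Rhat_max: "\<And>S. S \<in> space (PiM {..<n} (\<lambda>_. D)) \<Longrightarrow>
        \<exists>g\<in>R_hat F L f_ref n S (eps5 B_ref \<delta> n). \<forall>f\<in>R_hat F L f_ref n S (eps5 B_ref \<delta> n). \<phi> f \<le> \<phi> g"
  shows "\<exists>A \<in> sets (PiM {..<n} (\<lambda>_. D)).
           A \<subseteq> {S \<in> space (PiM {..<n} (\<lambda>_. D)).
                   \<phi> ` R_set F D L f_ref 0 \<subseteq>
                     {Inf (\<phi> ` R_hat F L f_ref n S (eps5 B_ref \<delta> n)) ..
                      Sup (\<phi> ` R_hat F L f_ref n S (eps5 B_ref \<delta> n))}}
         \<and> measure (PiM {..<n} (\<lambda>_. D)) A \<ge> 1 - \<delta>"
proof -
  let ?P = "PiM {..<n} (\<lambda>_. D)" and ?R0 = "R_set F D L f_ref 0"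
  let ?Rhat = "\<lambda>S. R_hat F L f_ref n S (eps5 B_ref \<delta> n)"
  interpret P: prob_space ?P by (intro prob_space_PiM D)
  obtain g_min g_max where extrema: "g_min \<in> ?R0" "g_max \<in> ?R0"
    "\<And>f. f \<in> ?R0 \<Longrightarrow> \<phi> g_min \<le> \<phi> f \<and> \<phi> f \<le> \<phi> g_max"
    using R0_min R0_max by metis
  have "n > 0" using n by simp
  obtain E_min where E_min: "E_min \<in> sets ?P" "E_min \<subseteq> {S \<in> space ?P. g_min \<in> ?Rhat S}"
      "P.prob E_min \<ge> 1 - \<delta> / 2"
    using R_set_0_in_R_hat_eps5_whp[OF D \<open>n > 0\<close> L_int f_ref extrema(1) bound[OF extrema(1)] \<delta>] .
  obtain E_max where E_max: "E_max \<in> sets ?P" "E_max \<subseteq> {S \<in> space ?P. g_max \<in> ?Rhat S}"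
      "P.prob E_max \<ge> 1 - \<delta> / 2"
    using R_set_0_in_R_hat_eps5_whp[OF D \<open>n > 0\<close> L_int f_ref extrema(2) bound[OF extrema(2)] \<delta>] .
  have "E_min \<inter> E_max \<subseteq> {S \<in> space ?P. \<phi> ` ?R0 \<subseteq> {Inf (\<phi> ` ?Rhat S) .. Sup (\<phi> ` ?Rhat S)}}"
  proof
    fix S assume "S \<in> E_min \<inter> E_max"
    then have "S \<in> space ?P" "g_min \<in> ?Rhat S" "g_max \<in> ?Rhat S"
      using E_min E_max by auto
    moreover have "bdd_below (\<phi> ` ?Rhat S)" "bdd_above (\<phi> ` ?Rhat S)"
      using Rhat_min[OF \<open>S \<in> space ?P\<close>] Rhat_max[OF \<open>S \<in> space ?P\<close>]
      by (auto intro: bdd_belowI2 bdd_aboveI2)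
    ultimately have "\<phi> ` ?R0 \<subseteq> {Inf (\<phi> ` ?Rhat S) .. Sup (\<phi> ` ?Rhat S)}"
      using extrema(3) by (intro image_subset_atLeastAtMost_Inf_Sup)
    with \<open>S \<in> space ?P\<close> show "S \<in> {S \<in> space ?P. \<phi> ` ?R0 \<subseteq> {Inf (\<phi> ` ?Rhat S) .. Sup (\<phi> ` ?Rhat S)}}"
      by simp
  qed
  moreover have "P.prob (E_min \<inter> E_max) \<ge> 1 - \<delta>"
    using P.prob_Int_ge[OF E_min(1) E_max(1) E_min(3) E_max(3)] by simp
  ultimately show ?thesis
    using E_min(1) E_max(1) by blast
qed

end
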